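(* Let $G$ be a finite group, acting on itself by left multiplication. There is a one-to-one correspondence between rank $3$ $G$-invariant matroid structures on $G$ and pairs $(H,\sim)$ consisting of a proper subgroup $H \subseteq G$ and a nontrivial equivalence relation $\sim$ on $G/H - \{\bar{1}\}$ satisfying: (1) if $\bar{a} \sim \bar{b}$ and $\bar{a} \neq \bar{b}$, then $\overline{a^{-1}} \sim \overline{a^{-1}b}$; (2) if $\bar{a} \sim \bar{b}$ and $h \in H$, then $\overline{ha} \sim \overline{hb}$. Furthermore, under this correspondence $H$ is the trivial group if and only if the matroid is simple.
   Context: $G/H$ denotes the set of left cosets of $H$ and $\bar{a}$ denotes the coset $aH$. A matroid on a $G$-set $X$ is $G$-invariant if for every $g \in G$ and every basis $B$, the set $gB$ is again a basis. An equivalence relation is nontrivial if it has at least two equivalence classes. A matroid is simple if every circuit has at least three elements. *)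

theory Defs
  imports "HOL-Algebra.Left_Coset"
begin

definition matroid_bases :: "'a set \<Rightarrow> 'a set set \<Rightarrow> bool" where
  "matroid_bases E \<B> \<longleftrightarrow> finite E \<and> \<B> \<noteq> {} \<and> (\<forall>B\<in>\<B>. B \<subseteq> E) \<and>
     (\<forall>B1\<in>\<B>. \<forall>B2\<in>\<B>. \<forall>x\<in>B1 - B2. \<exists>y\<in>B2 - B1. insert y (B1 - {x}) \<in> \<B>)"

definition m_indep :: "'a set set \<Rightarrow> 'a set \<Rightarrow> bool" where
  "m_indep \<B> I \<longleftrightarrow> (\<exists>B\<in>\<B>. I \<subseteq> B)"

definition m_rank_of :: "'a set set \<Rightarrow> 'a set \<Rightarrow> nat" where
  "m_rank_of \<B> X = Max (card ` {I. I \<subseteq> X \<and> m_indep \<B> I})"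

definition matroid_rank :: "'a set \<Rightarrow> 'a set set \<Rightarrow> nat" where
  "matroid_rank E \<B> = m_rank_of \<B> E"

definition m_closure :: "'a set \<Rightarrow> 'a set set \<Rightarrow> 'a set \<Rightarrow> 'a set" where
  "m_closure E \<B> X = {x \<in> E. m_rank_of \<B> (insert x X) = m_rank_of \<B> X}"

definition m_circuit :: "'a set \<Rightarrow> 'a set set \<Rightarrow> 'a set \<Rightarrow> bool" where
  "m_circuit E \<B> C \<longleftrightarrow> C \<subseteq> E \<and> \<not> m_indep \<B> C \<and> (\<forall>D. D \<subset> C \<longrightarrow> m_indep \<B> D)"

definition simple_matroid :: "'a set \<Rightarrow> 'a set set \<Rightarrow> bool" where
  "simple_matroid E \<B> \<longleftrightarrow> (\<forall>C. m_circuit E \<B> C \<longrightarrow> card C \<ge> 3)"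

definition G_invariant :: "('a, 'b) monoid_scheme \<Rightarrow> 'a set set \<Rightarrow> bool" where
  "G_invariant G \<B> \<longleftrightarrow> (\<forall>g\<in>carrier G. \<forall>B\<in>\<B>. g <#\<^bsub>G\<^esub> B \<in> \<B>)"

definition rank3_inv_matroids :: "('a, 'b) monoid_scheme \<Rightarrow> 'a set set set" where
  "rank3_inv_matroids G = {\<B>. matroid_bases (carrier G) \<B> \<and> G_invariant G \<B>
                               \<and> matroid_rank (carrier G) \<B> = 3}"

definition valid_pair :: "('a, 'b) monoid_scheme \<Rightarrow> 'a set \<Rightarrow> ('a set \<times> 'a set) set \<Rightarrow> bool" where
  "valid_pair G H r \<longleftrightarrow>
     subgroup H G \<and> H \<noteq> carrier G \<and>
     equiv (lcosets\<^bsub>G\<^esub> H - {\<one>\<^bsub>G\<^esub> <#\<^bsub>G\<^esub> H}) r \<and>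
     card ((lcosets\<^bsub>G\<^esub> H - {\<one>\<^bsub>G\<^esub> <#\<^bsub>G\<^esub> H}) // r) \<ge> 2 \<and>
     (\<forall>a\<in>carrier G. \<forall>b\<in>carrier G.
        (a <#\<^bsub>G\<^esub> H, b <#\<^bsub>G\<^esub> H) \<in> r \<and> a <#\<^bsub>G\<^esub> H \<noteq> b <#\<^bsub>G\<^esub> H \<longrightarrow>
        (inv\<^bsub>G\<^esub> a <#\<^bsub>G\<^esub> H, (inv\<^bsub>G\<^esub> a \<otimes>\<^bsub>G\<^esub> b) <#\<^bsub>G\<^esub> H) \<in> r) \<and>
     (\<forall>a\<in>carrier G. \<forall>b\<in>carrier G. \<forall>h\<in>H.
        (a <#\<^bsub>G\<^esub> H, b <#\<^bsub>G\<^esub> H) \<in> r \<longrightarrow>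
        ((h \<otimes>\<^bsub>G\<^esub> a) <#\<^bsub>G\<^esub> H, (h \<otimes>\<^bsub>G\<^esub> b) <#\<^bsub>G\<^esub> H) \<in> r)"

definition valid_pairs :: "('a, 'b) monoid_scheme \<Rightarrow> ('a set \<times> ('a set \<times> 'a set) set) set" where
  "valid_pairs G = {(H, r). valid_pair G H r}"

section \<open>The correspondence: H = cl{1}, and two nontrivial cosets are related
  iff they lie on the same line (rank-2 flat) through 1\<close>

definition matroid_to_pair ::
  "('a, 'b) monoid_scheme \<Rightarrow> 'a set set \<Rightarrow> 'a set \<times> ('a set \<times> 'a set) set" where
  "matroid_to_pair G \<B> =
     (let H = m_closure (carrier G) \<B> {\<one>\<^bsub>G\<^esub>};
          S = lcosets\<^bsub>G\<^esub> H - {\<one>\<^bsub>G\<^esub> <#\<^bsub>G\<^esub> H}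
      in (H, {(A, B). A \<in> S \<and> B \<in> S \<and>
               m_closure (carrier G) \<B> (insert \<one>\<^bsub>G\<^esub> A) =
               m_closure (carrier G) \<B> (insert \<one>\<^bsub>G\<^esub> B)}))"

end

theory Submission
  imports Defs
begin

text \<open>
  An invariant basis family \<open>\<B>\<close> is determined by the triples \<open>{1, u, v}\<close> it contains. The
  closure \<open>H\<close> of \<open>{1}\<close> consists of \<open>1\<close> and the elements parallel to \<open>1\<close>; parallelism is
  transitive and invariant under translation, so \<open>H\<close> is a subgroup whose left cosets are the
  parallel classes. For \<open>a \<notin> H\<close> the closure of \<open>{1} \<union> aH\<close> is the line through \<open>1\<close> and \<open>a\<close>,
  and two nontrivial cosets are related iff they lie on the same line through \<open>1\<close>. Condition (1)
  is the same statement seen from \<open>a\<close> after translating by \<open>a\<inverse>\<close>; condition (2) holds because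
  every \<open>h \<in> H\<close> is parallel to \<open>1\<close> and may replace it in a basis.
  Conversely, a pair \<open>(H, \<sim>)\<close> declares \<open>1, u, v\<close> collinear when \<open>u \<in> H\<close>, \<open>v \<in> H\<close> or
  \<open>uH \<sim> vH\<close>, and general triples by translation. The non-collinear triples satisfy basis
  exchange because any three points on a line through two non-parallel points are collinear, and
  the two constructions are mutually inverse. Finally, the matroid is simple iff no element other
  than \<open>1\<close> is parallel to \<open>1\<close>, i.e. iff \<open>H = {1}\<close>.
\<close>

section \<open>Bases, independence, rank and closure\<close>

lemma matroid_bases_finite: "matroid_bases E \<B> \<Longrightarrow> finite E"
  by (simp add: matroid_bases_def)

lemma matroid_bases_subset: "matroid_bases E \<B> \<Longrightarrow> B \<in> \<B> \<Longrightarrow> B \<subseteq> E"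
  by (auto simp: matroid_bases_def)

lemma matroid_bases_exchange:
  "matroid_bases E \<B> \<Longrightarrow> B1 \<in> \<B> \<Longrightarrow> B2 \<in> \<B> \<Longrightarrow> x \<in> B1 - B2 \<Longrightarrow>
     \<exists>y\<in>B2 - B1. insert y (B1 - {x}) \<in> \<B>"
  unfolding matroid_bases_def by blast

lemma matroid_bases_finite_basis: "matroid_bases E \<B> \<Longrightarrow> B \<in> \<B> \<Longrightarrow> finite B"
  using matroid_bases_finite matroid_bases_subset finite_subset by metis

lemma matroid_bases_card_eq:
  assumes M: "matroid_bases E \<B>" and B1: "B1 \<in> \<B>" and B2: "B2 \<in> \<B>"
  shows "card B1 = card B2"
  using B1
proof (induction "card (B1 - B2)" arbitrary: B1 rule: less_induct)
  case less
  show ?case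
  proof (cases "B1 \<subseteq> B2")
    case True
    have "B2 \<subseteq> B1"
    proof
      fix x assume "x \<in> B2"
      with True matroid_bases_exchange[OF M B2 less.prems, of x] show "x \<in> B1" by blast
    qed
    with True show ?thesis by simp
  next
    case False
    then obtain x where x: "x \<in> B1 - B2" by blast
    from matroid_bases_exchange[OF M less.prems B2 x] obtain y
      where y: "y \<in> B2 - B1" and B1': "insert y (B1 - {x}) \<in> \<B>" by blast
    have fin: "finite B1" using matroid_bases_finite_basis[OF M less.prems] .
    have "insert y (B1 - {x}) - B2 = (B1 - B2) - {x}" using y by blast
    moreover have "card ((B1 - B2) - {x}) < card (B1 - B2)"
      using x fin by (meson card_Diff1_less finite_Diff)
    ultimately have "card (insert y (B1 - {x})) = card B2"
      using less.hyps[OF _ B1'] by simp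
    moreover have "card (insert y (B1 - {x})) = card B1"
      using x y fin card_Suc_Diff1[OF fin, of x] by simp
    ultimately show ?thesis by simp
  qed
qed

lemma m_indep_subset: "m_indep \<B> I \<Longrightarrow> J \<subseteq> I \<Longrightarrow> m_indep \<B> J"
  unfolding m_indep_def by blast

lemma m_indep_subset_ground: "matroid_bases E \<B> \<Longrightarrow> m_indep \<B> I \<Longrightarrow> I \<subseteq> E"
  unfolding m_indep_def using matroid_bases_subset by blast

lemma m_indep_finite: "matroid_bases E \<B> \<Longrightarrow> m_indep \<B> I \<Longrightarrow> finite I"
  using m_indep_subset_ground matroid_bases_finite finite_subset by metis

lemma m_indep_empty: "matroid_bases E \<B> \<Longrightarrow> m_indep \<B> {}"
  unfolding matroid_bases_def m_indep_def by blast

lemma m_indep_card_le_basis: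
  assumes M: "matroid_bases E \<B>" and I: "m_indep \<B> I" and B: "B \<in> \<B>"
  shows "card I \<le> card B"
proof -
  obtain B' where "B' \<in> \<B>" "I \<subseteq> B'" using I unfolding m_indep_def by blast
  then show ?thesis
    using matroid_bases_card_eq[OF M _ B] matroid_bases_finite_basis[OF M] card_mono by metis
qed

lemma m_indep_augment:
  assumes M: "matroid_bases E \<B>" and I: "m_indep \<B> I" and J: "m_indep \<B> J"
    and lt: "card I < card J"
  shows "\<exists>x\<in>J - I. m_indep \<B> (insert x I)"
proof (rule ccontr)
  assume no_aug: "\<not> ?thesis"
  obtain BJ where BJ: "BJ \<in> \<B>" "J \<subseteq> BJ" using J unfolding m_indep_def by blast
  have fBJ: "finite BJ" using matroid_bases_finite_basis[OF M BJ(1)] .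
  \<comment> \<open>a basis through \<open>I\<close> with fewest elements outside \<open>I \<union> BJ\<close>; exchange shows it has none\<close>
  obtain B where B: "B \<in> \<B>" "I \<subseteq> B"
    and B_min: "\<And>B'. B' \<in> \<B> \<Longrightarrow> I \<subseteq> B' \<Longrightarrow> card (B - (I \<union> BJ)) \<le> card (B' - (I \<union> BJ))"
    using I ex_has_least_nat[of "\<lambda>B. B \<in> \<B> \<and> I \<subseteq> B" _ "\<lambda>B. card (B - (I \<union> BJ))"]
    unfolding m_indep_def by metis
  have "B - (I \<union> BJ) = {}"
  proof (rule ccontr)
    assume "B - (I \<union> BJ) \<noteq> {}"
    then obtain x where x: "x \<in> B - (I \<union> BJ)" by blast
    from matroid_bases_exchange[OF M B(1) BJ(1), of x] x obtain y
      where y: "y \<in> BJ - B" and B': "insert y (B - {x}) \<in> \<B>" by blast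
    have "insert y (B - {x}) - (I \<union> BJ) = (B - (I \<union> BJ)) - {x}" using y by blast
    moreover have "card ((B - (I \<union> BJ)) - {x}) < card (B - (I \<union> BJ))"
      using x matroid_bases_finite_basis[OF M B(1)] by (meson card_Diff1_less finite_Diff)
    ultimately show False using B_min[OF B'] B x by fastforce
  qed
  moreover have "B \<inter> J \<subseteq> I"
    using no_aug B unfolding m_indep_def by blast
  ultimately have "B \<subseteq> I \<union> (BJ - J)" by blast
  then have "card B \<le> card I + card (BJ - J)"
    using fBJ m_indep_finite[OF M I] card_mono card_Un_le
    by (metis finite_Diff finite_UnI le_trans)
  also have "card (BJ - J) = card BJ - card J"
    using BJ fBJ by (meson card_Diff_subset finite_subset)
  finally have "card B < card BJ"
    using lt card_mono[OF fBJ BJ(2)] by linarith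
  then show False using matroid_bases_card_eq[OF M B(1) BJ(1)] by simp
qed

lemma m_indep_pair_trans:
  assumes M: "matroid_bases E \<B>" and y: "m_indep \<B> {y}" and xz: "x \<noteq> z"
    and xy: "\<not> m_indep \<B> {x, y}" and yz: "\<not> m_indep \<B> {y, z}"
  shows "\<not> m_indep \<B> {x, z}"
proof
  assume "m_indep \<B> {x, z}"
  from m_indep_augment[OF M y this] xz obtain w
    where "w = x \<or> w = z" "m_indep \<B> (insert w {y})" by auto
  with xy yz show False by (auto simp: insert_commute)
qed

lemma finite_card_indep_sets:
  assumes M: "matroid_bases E \<B>"
  shows "finite (card ` {I. I \<subseteq> X \<and> m_indep \<B> I})"
proof -
  have "card ` {I. I \<subseteq> X \<and> m_indep \<B> I} \<subseteq> {..card E}"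
    using m_indep_subset_ground[OF M] matroid_bases_finite[OF M] by (auto intro: card_mono)
  then show ?thesis using finite_subset by blast
qed

lemma m_rank_ofI:
  assumes "matroid_bases E \<B>" and "I \<subseteq> X" "m_indep \<B> I" "card I = k"
    and "\<And>J. J \<subseteq> X \<Longrightarrow> m_indep \<B> J \<Longrightarrow> card J \<le> k"
  shows "m_rank_of \<B> X = k"
  unfolding m_rank_of_def using assms finite_card_indep_sets[OF assms(1)]
  by (intro Max_eqI) auto

lemma m_rank_of_indep:
  assumes M: "matroid_bases E \<B>" and I: "m_indep \<B> I"
  shows "m_rank_of \<B> I = card I"
  using m_indep_finite[OF M I] by (intro m_rank_ofI[OF M _ I]) (auto intro: card_mono)

lemma matroid_rank_eq_card_basis:
  assumes M: "matroid_bases E \<B>" and B: "B \<in> \<B>"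
  shows "matroid_rank E \<B> = card B"
  unfolding matroid_rank_def
proof (rule m_rank_ofI[OF M])
  show "B \<subseteq> E" "m_indep \<B> B" using matroid_bases_subset[OF M B] B by (auto simp: m_indep_def)
qed (use m_indep_card_le_basis[OF M _ B] in auto)

lemma card_doubleton_le: "card {a, b} \<le> 2"
  by (simp add: card_insert_if)

lemma card_3_obtain:
  assumes "card B = 3" "x \<in> B"
  obtains y z where "B = {x, y, z}" "x \<noteq> y" "y \<noteq> z" "x \<noteq> z"
  using assms by (auto simp: card_3_iff insert_commute)

lemma m_rank_of_pair_dependent:
  assumes M: "matroid_bases E \<B>" and a: "m_indep \<B> {a}" and dep: "\<not> m_indep \<B> {a, x}"
  shows "m_rank_of \<B> {a, x} = 1"
proof (rule m_rank_ofI[OF M _ a])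
  fix J assume J: "J \<subseteq> {a, x}" "m_indep \<B> J"
  then have "J \<subset> {a, x}" using dep by blast
  then have "card J < card {a, x}" by (rule psubset_card_mono[rotated]) simp
  also have "card {a, x} \<le> 2" by (rule card_doubleton_le)
  finally show "card J \<le> 1" by simp
qed auto

lemma m_closure_singleton:
  assumes M: "matroid_bases E \<B>" and a: "m_indep \<B> {a}"
  shows "m_closure E \<B> {a} = {x \<in> E. x = a \<or> \<not> m_indep \<B> {a, x}}"
proof -
  have "m_rank_of \<B> {a, x} = m_rank_of \<B> {a} \<longleftrightarrow> x = a \<or> \<not> m_indep \<B> {a, x}" for x
  proof -
    consider "x = a" | "x \<noteq> a" "m_indep \<B> {a, x}" | "\<not> m_indep \<B> {a, x}" by blast
    then show ?thesis
      using m_rank_of_indep[OF M] m_rank_of_pair_dependent[OF M a] a by cases auto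
  qed
  then show ?thesis unfolding m_closure_def by (simp add: insert_commute)
qed

lemma simple_matroid_iff_pairs_indep:
  assumes M: "matroid_bases E \<B>" and loopless: "\<And>x. x \<in> E \<Longrightarrow> m_indep \<B> {x}"
  shows "simple_matroid E \<B> \<longleftrightarrow> (\<forall>x\<in>E. \<forall>y\<in>E. x \<noteq> y \<longrightarrow> m_indep \<B> {x, y})"
proof
  assume simple: "simple_matroid E \<B>"
  show "\<forall>x\<in>E. \<forall>y\<in>E. x \<noteq> y \<longrightarrow> m_indep \<B> {x, y}"
  proof (intro ballI impI; rule ccontr)
    fix x y assume xy: "x \<in> E" "y \<in> E" "x \<noteq> y" and dep: "\<not> m_indep \<B> {x, y}"
    have "m_circuit E \<B> {x, y}"
      unfolding m_circuit_def
    proof (intro conjI allI impI)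
      fix D assume "D \<subset> {x, y}"
      then have "D \<subseteq> {x} \<or> D \<subseteq> {y}" by blast
      then show "m_indep \<B> D" using loopless xy m_indep_subset by blast
    qed (use xy dep in auto)
    then show False using simple xy unfolding simple_matroid_def by fastforce
  qed
next
  assume pairs: "\<forall>x\<in>E. \<forall>y\<in>E. x \<noteq> y \<longrightarrow> m_indep \<B> {x, y}"
  show "simple_matroid E \<B>"
    unfolding simple_matroid_def
  proof (intro allI impI; rule ccontr)
    fix C assume C: "m_circuit E \<B> C" and "\<not> 3 \<le> card C"
    then have "card C = 0 \<or> card C = 1 \<or> card C = 2" by linarith
    moreover have CE: "C \<subseteq> E" and dep: "\<not> m_indep \<B> C" using C unfolding m_circuit_def by auto
    moreover have "finite C" using CE matroid_bases_finite[OF M] finite_subset by blast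
    ultimately show False
      using m_indep_empty[OF M] loopless pairs
      by (auto simp: card_1_singleton_iff card_2_iff)
  qed
qed

lemma equiv_kernel_on: "equiv A {(x, y). x \<in> A \<and> y \<in> A \<and> f x = f y}"
  unfolding equiv_def refl_on_def sym_def trans_def by auto

lemma two_le_card_quotient:
  assumes r: "equiv A r" and A: "finite A" and a: "a \<in> A" and b: "b \<in> A" and ab: "(a, b) \<notin> r"
  shows "2 \<le> card (A // r)"
proof -
  have "r `` {a} \<noteq> r `` {b}" using eq_equiv_class_iff[OF r a b] ab by blast
  then have "card {r `` {a}, r `` {b}} = 2" by simp
  moreover have "{r `` {a}, r `` {b}} \<subseteq> A // r" using a b by (auto intro: quotientI)
  moreover have "finite (A // r)" using finite_quotient[OF A equiv_type[OF r]] .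
  ultimately show ?thesis by (metis card_mono)
qed

lemma ex_not_related_if_two_le_card_quotient:
  assumes r: "equiv A r" and card: "2 \<le> card (A // r)" and a: "a \<in> A"
  shows "\<exists>b\<in>A. (a, b) \<notin> r"
proof (rule ccontr)
  assume "\<not> ?thesis"
  then have "A // r \<subseteq> {r `` {a}}"
    using equiv_class_eq[OF r] by (auto elim!: quotientE)
  then have "card (A // r) \<le> 1" using card_mono[of "{r `` {a}}"] by simp
  with card show False by simp
qed

context group
begin

lemma l_coset_insert: "g <# insert x X = insert (g \<otimes> x) (g <# X)"
  unfolding l_coset_def by auto

lemma l_coset_empty [simp]: "g <# {} = {}"
  unfolding l_coset_def by auto

lemma lcos_inv_cancel: "g \<in> carrier G \<Longrightarrow> X \<subseteq> carrier G \<Longrightarrow> inv g <# (g <# X) = X"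
  by (simp add: lcos_m_assoc lcos_mult_one)

lemma inv_mult_translate:
  "g \<in> carrier G \<Longrightarrow> x \<in> carrier G \<Longrightarrow> y \<in> carrier G \<Longrightarrow> inv (g \<otimes> x) \<otimes> (g \<otimes> y) = inv x \<otimes> y"
  by (simp add: inv_mult_group m_assoc[symmetric]) (simp add: m_assoc)

lemma inv_mult_eq_one_iff: "x \<in> carrier G \<Longrightarrow> y \<in> carrier G \<Longrightarrow> inv x \<otimes> y = \<one> \<longleftrightarrow> x = y"
  using inv_solve_left' by fastforce

lemma mem_lcos_iff:
  assumes "subgroup K G" "a \<in> carrier G" "x \<in> carrier G"
  shows "x \<in> a <# K \<longleftrightarrow> inv a \<otimes> x \<in> K"
  using subgroup.lcos_module_imp[OF assms(1) is_group assms(2)]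
    subgroup.lcos_module_rev[OF assms(1) is_group assms(2,3)] by blast

lemma lcos_eq_iff:
  assumes K: "subgroup K G" and a: "a \<in> carrier G" and b: "b \<in> carrier G"
  shows "a <# K = b <# K \<longleftrightarrow> inv a \<otimes> b \<in> K"
  using l_repr_independence[OF _ a K] lcos_self[OF b K] mem_lcos_iff[OF K a b] by metis

lemma lcos_eq_one_iff:
  assumes K: "subgroup K G" and a: "a \<in> carrier G"
  shows "a <# K = \<one> <# K \<longleftrightarrow> a \<in> K"
  using lcos_eq_iff[OF K one_closed a] a
  by (auto simp: subgroup.m_inv_closed[OF K] dest: subgroup.m_inv_closed[OF K])

lemma subgroup_mult_mem_iff:
  assumes K: "subgroup K G" and h: "h \<in> K" and a: "a \<in> carrier G"
  shows "h \<otimes> a \<in> K \<longleftrightarrow> a \<in> K"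
proof
  assume "h \<otimes> a \<in> K"
  then have "inv h \<otimes> (h \<otimes> a) \<in> K" using K h by (simp add: subgroup.m_closed subgroup.m_inv_closed)
  then show "a \<in> K" using K h a by (simp add: m_assoc[symmetric] subgroup.mem_carrier)
qed (use K h in \<open>simp add: subgroup.m_closed\<close>)

abbreviation nontrivial_lcosets :: "'a set \<Rightarrow> 'a set set" where
  "nontrivial_lcosets K \<equiv> lcosets K - {\<one> <# K}"

lemma lcos_mem_nontrivial_lcosets_iff:
  "subgroup K G \<Longrightarrow> a \<in> carrier G \<Longrightarrow> a <# K \<in> nontrivial_lcosets K \<longleftrightarrow> a \<notin> K"
  unfolding LCOSETS_def using lcos_eq_one_iff by auto

lemma nontrivial_lcosetsE:
  assumes "subgroup K G" "A \<in> nontrivial_lcosets K"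
  obtains a where "a \<in> carrier G" "a \<notin> K" "A = a <# K"
  using assms lcos_mem_nontrivial_lcosets_iff unfolding LCOSETS_def by blast

lemma finite_nontrivial_lcosets:
  "subgroup K G \<Longrightarrow> finite (carrier G) \<Longrightarrow> finite (nontrivial_lcosets K)"
  using lcosets_subset_PowG finite_subset by (metis finite_Diff finite_Pow_iff)

end

section \<open>Collinearity determined by a pair\<close>

definition collinear_one ::
  "('a, 'b) monoid_scheme \<Rightarrow> 'a set \<Rightarrow> ('a set \<times> 'a set) set \<Rightarrow> 'a \<Rightarrow> 'a \<Rightarrow> bool" where
  "collinear_one G H r u v \<longleftrightarrow> u \<in> H \<or> v \<in> H \<or> (u <#\<^bsub>G\<^esub> H, v <#\<^bsub>G\<^esub> H) \<in> r"

definition collinear ::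
  "('a, 'b) monoid_scheme \<Rightarrow> 'a set \<Rightarrow> ('a set \<times> 'a set) set \<Rightarrow> 'a \<Rightarrow> 'a \<Rightarrow> 'a \<Rightarrow> bool" where
  "collinear G H r x y z \<longleftrightarrow> collinear_one G H r (inv\<^bsub>G\<^esub> x \<otimes>\<^bsub>G\<^esub> y) (inv\<^bsub>G\<^esub> x \<otimes>\<^bsub>G\<^esub> z)"

definition pair_bases :: "('a, 'b) monoid_scheme \<Rightarrow> 'a set \<Rightarrow> ('a set \<times> 'a set) set \<Rightarrow> 'a set set" where
  "pair_bases G H r = {{x, y, z} | x y z. x \<in> carrier G \<and> y \<in> carrier G \<and> z \<in> carrier G
      \<and> \<not> collinear G H r x y z}"

section \<open>From a rank 3 invariant matroid to a pair\<close>

locale rank3_inv_matroid = group G for G :: "('a, 'b) monoid_scheme" (structure) +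
  fixes \<B> :: "'a set set"
  assumes matroid: "matroid_bases (carrier G) \<B>"
    and invariant: "G_invariant G \<B>"
    and rank3: "matroid_rank (carrier G) \<B> = 3"
begin

abbreviation indep :: "'a set \<Rightarrow> bool" where "indep \<equiv> m_indep \<B>"

lemma finite_carrier: "finite (carrier G)"
  using matroid by (rule matroid_bases_finite)

lemma ex_basis: "\<exists>B. B \<in> \<B>"
  using matroid unfolding matroid_bases_def by blast

lemma basis_card: "B \<in> \<B> \<Longrightarrow> card B = 3"
  using matroid_rank_eq_card_basis[OF matroid] rank3 by simp

lemma basis_indep: "B \<in> \<B> \<Longrightarrow> indep B"
  unfolding m_indep_def by blast

lemma basis_iff: "T \<in> \<B> \<longleftrightarrow> indep T \<and> card T = 3"
proof
  assume "indep T \<and> card T = 3"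
  moreover obtain B where B: "B \<in> \<B>" "T \<subseteq> B" using calculation unfolding m_indep_def by blast
  ultimately have "T = B"
    using card_subset_eq[OF matroid_bases_finite_basis[OF matroid B(1)] B(2)] basis_card by simp
  then show "T \<in> \<B>" using B by simp
qed (simp add: basis_indep basis_card)

lemma triple_basis_iff: "{x, y, z} \<in> \<B> \<longleftrightarrow> indep {x, y, z} \<and> x \<noteq> y \<and> y \<noteq> z \<and> x \<noteq> z"
  using basis_iff by (auto simp: card_insert_if)

lemma translate_basis_iff:
  assumes g: "g \<in> carrier G" and X: "X \<subseteq> carrier G"
  shows "g <# X \<in> \<B> \<longleftrightarrow> X \<in> \<B>"
  using invariant g inv_closed[OF g] lcos_inv_cancel[OF g X] unfolding G_invariant_def by metis

lemma translate_indep_iff: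
  assumes g: "g \<in> carrier G" and X: "X \<subseteq> carrier G"
  shows "indep (g <# X) \<longleftrightarrow> indep X"
proof -
  have "indep (h <# Y)" if "h \<in> carrier G" "indep Y" for h Y
  proof -
    obtain B where "B \<in> \<B>" "Y \<subseteq> B" using \<open>indep Y\<close> unfolding m_indep_def by blast
    moreover have "h <# Y \<subseteq> h <# B" using \<open>Y \<subseteq> B\<close> unfolding l_coset_def by blast
    ultimately show ?thesis using invariant \<open>h \<in> carrier G\<close> unfolding G_invariant_def m_indep_def by blast
  qed
  then show ?thesis using g lcos_inv_cancel[OF g X] by (metis inv_closed)
qed

lemma translate_triple_basis_iff:
  "g \<in> carrier G \<Longrightarrow> x \<in> carrier G \<Longrightarrow> y \<in> carrier G \<Longrightarrow> z \<in> carrier G \<Longrightarrow>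
     {g \<otimes> x, g \<otimes> y, g \<otimes> z} \<in> \<B> \<longleftrightarrow> {x, y, z} \<in> \<B>"
  using translate_basis_iff[of g "{x, y, z}"] by (simp add: l_coset_insert)

lemma translate_pair_indep_iff:
  "g \<in> carrier G \<Longrightarrow> x \<in> carrier G \<Longrightarrow> y \<in> carrier G \<Longrightarrow>
     indep {g \<otimes> x, g \<otimes> y} \<longleftrightarrow> indep {x, y}"
  using translate_indep_iff[of g "{x, y}"] by (simp add: l_coset_insert)

lemma indep_singleton:
  assumes x: "x \<in> carrier G" shows "indep {x}"
proof -
  obtain B where B: "B \<in> \<B>" using ex_basis by blast
  then obtain b where b: "b \<in> B" using basis_card by fastforce
  then have "indep {b}" and bc: "b \<in> carrier G"
    using B matroid_bases_subset[OF matroid B] by (auto simp: m_indep_def)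
  then have "indep ((x \<otimes> inv b) <# {b})" using translate_indep_iff x by simp
  then show ?thesis using x bc by (simp add: l_coset_insert m_assoc)
qed

lemma indep_card_le_3: "indep I \<Longrightarrow> card I \<le> 3"
  using m_indep_card_le_basis[OF matroid] ex_basis basis_card by metis

definition H :: "'a set" where
  "H = {x \<in> carrier G. x = \<one> \<or> \<not> indep {\<one>, x}}"

lemma m_closure_one: "m_closure (carrier G) \<B> {\<one>} = H"
  unfolding H_def using m_closure_singleton[OF matroid indep_singleton[OF one_closed]] .

lemma H_subset: "H \<subseteq> carrier G" and one_in_H: "\<one> \<in> H"
  unfolding H_def by auto

lemma indep_pair_iff:
  assumes x: "x \<in> carrier G" and y: "y \<in> carrier G" and xy: "x \<noteq> y"
  shows "indep {x, y} \<longleftrightarrow> inv x \<otimes> y \<notin> H"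
  using translate_pair_indep_iff[of "inv x" x y] inv_mult_eq_one_iff[OF x y] x y xy
  unfolding H_def by auto

lemma notin_H_iff: "x \<in> carrier G \<Longrightarrow> x \<notin> H \<longleftrightarrow> x \<noteq> \<one> \<and> indep {\<one>, x}"
  unfolding H_def by auto

lemma subgroup_H: "subgroup H G"
proof (rule subgroupI[OF H_subset])
  show "H \<noteq> {}" using one_in_H by blast
next
  fix x assume x: "x \<in> H"
  then have xc: "x \<in> carrier G" using H_subset by blast
  with x show "inv x \<in> H"
    using translate_pair_indep_iff[of "inv x" \<one> x] unfolding H_def by (auto simp: insert_commute)
next
  fix x y assume x: "x \<in> H" and y: "y \<in> H"
  then have xc: "x \<in> carrier G" and yc: "y \<in> carrier G" using H_subset by blast+
  show "x \<otimes> y \<in> H"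
  proof (cases "x = \<one> \<or> y = \<one> \<or> x \<otimes> y = \<one>")
    case True
    with x y xc yc one_in_H show ?thesis by auto
  next
    case False
    \<comment> \<open>parallelism is transitive: \<open>1 \<parallel> x \<parallel> x y\<close>\<close>
    have "\<not> indep {\<one>, x}" using x False unfolding H_def by blast
    moreover have "\<not> indep {x, x \<otimes> y}"
      using y False translate_pair_indep_iff[of x \<one> y] xc yc unfolding H_def by auto
    ultimately have "\<not> indep {\<one>, x \<otimes> y}"
      using m_indep_pair_trans[OF matroid indep_singleton[OF xc]] False
      by (metis insert_commute)
    then show ?thesis unfolding H_def using xc yc by simp
  qed
qed

lemma basis_replace_parallel:
  assumes p: "p \<in> carrier G" and q: "q \<in> carrier G"
    and B: "{p, x, y} \<in> \<B>" and pq: "\<not> indep {p, q}"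
  shows "{q, x, y} \<in> \<B>"
proof -
  have iB: "indep {p, x, y}" and c3: "card {p, x, y} = 3" using B basis_iff by auto
  have q_notin: "q \<notin> {x, y}" using pq m_indep_subset[OF iB, of "{p, q}"] by blast
  \<comment> \<open>augment \<open>{q}\<close> twice from \<open>{p, x, y}\<close>; \<open>p\<close> can never be the new element\<close>
  obtain w where w: "w \<in> {p, x, y} - {q}" "indep {w, q}"
    using m_indep_augment[OF matroid indep_singleton[OF q] iB] c3 by auto
  have "w \<noteq> p" using w(2) pq by (auto simp: insert_commute)
  then have wxy: "w \<in> {x, y}" using w(1) by blast
  have "card {w, q} = 2" using q_notin wxy by auto
  then obtain w' where w': "w' \<in> {p, x, y} - {w, q}" "indep (insert w' {w, q})"
    using m_indep_augment[OF matroid w(2) iB] c3 by auto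
  have "w' \<noteq> p"
  proof
    assume "w' = p"
    then have "{p, q} \<subseteq> insert w' {w, q}" by blast
    then show False using w'(2) pq m_indep_subset by blast
  qed
  then have "insert w' {w, q} = {q, x, y}" using w' wxy c3 by (auto simp: card_insert_if split: if_splits)
  then show ?thesis using w'(2) q_notin c3 basis_iff by (auto simp: card_insert_if split: if_splits)
qed

definition line :: "'a \<Rightarrow> 'a set" where
  "line a = {x \<in> carrier G. {\<one>, a, x} \<notin> \<B>}"

lemma lcos_H_dependent:
  assumes a: "a \<in> carrier G" and y: "y \<in> a <# H" and z: "z \<in> a <# H" and yz: "y \<noteq> z"
  shows "\<not> indep {y, z}"
proof -
  have yc: "y \<in> carrier G" and zc: "z \<in> carrier G"
    using y z a l_coset_carrier subgroup_H by blast+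
  then have "inv a \<otimes> y \<in> H" "inv a \<otimes> z \<in> H"
    using y z mem_lcos_iff[OF subgroup_H a] by auto
  then have "inv (inv a \<otimes> y) \<otimes> (inv a \<otimes> z) \<in> H"
    using subgroup.m_inv_closed[OF subgroup_H] subgroup.m_closed[OF subgroup_H] by blast
  then show ?thesis using indep_pair_iff[OF yc zc yz] inv_mult_translate[OF inv_closed[OF a] yc zc] a
    by simp
qed

lemma basis_of_indep_subset_line:
  assumes a: "a \<in> carrier G" and x: "x \<in> carrier G"
    and I: "I \<subseteq> insert x (insert \<one> (a <# H))" "indep I" "card I = 3"
  shows "{\<one>, a, x} \<in> \<B>"
proof -
  have IB: "I \<in> \<B>" using basis_iff I by simp
  have fin: "finite I" using m_indep_finite[OF matroid I(2)] .
  \<comment> \<open>\<open>I\<close> meets the coset \<open>a H\<close>, whose elements are pairwise parallel, in exactly one point \<open>y\<close>\<close>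
  have "\<not> I \<subseteq> {x, \<one>}" using I(3) card_mono[of "{x, \<one>}" I] card_doubleton_le[of x \<one>] by auto
  then obtain y where y: "y \<in> I" "y \<in> a <# H" using I(1) by blast
  have "I - {y} \<subseteq> {x, \<one>}"
  proof
    fix z assume z: "z \<in> I - {y}"
    have "z \<notin> a <# H"
    proof
      assume "z \<in> a <# H"
      then have "\<not> indep {y, z}" using lcos_H_dependent[OF a y(2)] z by blast
      moreover have "{y, z} \<subseteq> I" using y z by blast
      ultimately show False using m_indep_subset[OF I(2)] by blast
    qed
    then show "z \<in> {x, \<one>}" using z I(1) by blast
  qed
  moreover have "card (I - {y}) = 2" using I(3) y(1) fin by simp
  ultimately have "I - {y} = {x, \<one>}"
    using card_subset_eq[of "{x, \<one>}" "I - {y}"] card_mono[of "{x, \<one>}" "I - {y}"]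
      card_doubleton_le[of x \<one>] by simp
  then have "I = {y, \<one>, x}" using insert_Diff[OF y(1)] by auto
  with IB have yB: "{y, \<one>, x} \<in> \<B>" by simp
  have yc: "y \<in> carrier G" using y(2) a l_coset_carrier subgroup_H by blast
  show ?thesis
  proof (cases "y = a")
    case False
    then have "\<not> indep {y, a}" using lcos_H_dependent[OF a y(2) lcos_self[OF a subgroup_H]] by simp
    then show ?thesis using basis_replace_parallel[OF yc a yB] by (simp add: insert_commute)
  qed (use yB in \<open>simp add: insert_commute\<close>)
qed

lemma rank_insert_line:
  assumes a: "a \<in> carrier G" "a \<notin> H" and x: "x \<in> carrier G"
  shows "m_rank_of \<B> (insert x (insert \<one> (a <# H))) = (if {\<one>, a, x} \<in> \<B> then 3 else 2)"
proof -
  let ?S = "insert x (insert \<one> (a <# H))"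
  have a_in: "a \<in> a <# H" using lcos_self[OF a(1) subgroup_H] .
  show ?thesis
  proof (cases "{\<one>, a, x} \<in> \<B>")
    case True
    have "m_rank_of \<B> ?S = 3"
      by (rule m_rank_ofI[OF matroid _ basis_indep[OF True] basis_card[OF True]])
        (use a_in indep_card_le_3 in auto)
    with True show ?thesis by simp
  next
    case False
    have "m_rank_of \<B> ?S = 2"
    proof (rule m_rank_ofI[OF matroid, of "{\<one>, a}"])
      show "{\<one>, a} \<subseteq> ?S" "indep {\<one>, a}" "card {\<one>, a} = 2"
        using a_in notin_H_iff[OF a(1)] a(2) by auto
      fix J assume J: "J \<subseteq> ?S" "indep J"
      show "card J \<le> 2"
      proof (rule ccontr)
        assume "\<not> card J \<le> 2"
        then have "card J = 3" using indep_card_le_3[OF J(2)] by simp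
        then show False using basis_of_indep_subset_line[OF a(1) x J] False by simp
      qed
    qed
    with False show ?thesis by simp
  qed
qed

lemma m_closure_line:
  assumes a: "a \<in> carrier G" "a \<notin> H"
  shows "m_closure (carrier G) \<B> (insert \<one> (a <# H)) = line a"
proof -
  have "insert a (insert \<one> (a <# H)) = insert \<one> (a <# H)"
    using lcos_self[OF a(1) subgroup_H] by blast
  moreover have "{\<one>, a, a} \<notin> \<B>" using basis_card card_doubleton_le[of \<one> a] by fastforce
  ultimately have "m_rank_of \<B> (insert \<one> (a <# H)) = 2"
    using rank_insert_line[OF a a(1)] by simp
  then show ?thesis
    unfolding m_closure_def line_def using rank_insert_line[OF a] by auto
qed

lemma line_subset:
  assumes u: "u \<in> carrier G" "u \<notin> H" and v: "v \<notin> H" and uv: "{\<one>, u, v} \<notin> \<B>"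
  shows "line u \<subseteq> line v"
proof
  fix x assume "x \<in> line u"
  then have x: "x \<in> carrier G" "{\<one>, u, x} \<notin> \<B>" unfolding line_def by auto
  show "x \<in> line v"
  proof (rule ccontr)
    assume "x \<notin> line v"
    then have B: "{\<one>, v, x} \<in> \<B>" using x unfolding line_def by blast
    have "indep {\<one>, u}" "\<one> \<noteq> u" using notin_H_iff[OF u(1)] u(2) by auto
    moreover have "card {\<one>, u} < card {\<one>, v, x}"
      using basis_card[OF B] card_doubleton_le[of \<one> u] by simp
    \<comment> \<open>augment \<open>{1, u}\<close> from \<open>{1, v, x}\<close>: adding \<open>v\<close> contradicts \<open>uv\<close>, adding \<open>x\<close> contradicts \<open>x \<in> line u\<close>\<close>
    ultimately obtain w where w: "w \<in> {\<one>, v, x} - {\<one>, u}" "indep (insert w {\<one>, u})"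
      using m_indep_augment[OF matroid _ basis_indep[OF B]] by blast
    then have "{w, \<one>, u} \<in> \<B>" using \<open>\<one> \<noteq> u\<close> triple_basis_iff by auto
    moreover have "w = v \<or> w = x" using w(1) by blast
    ultimately show False using uv x(2) by (metis insert_commute)
  qed
qed

lemma line_eq_iff:
  assumes u: "u \<in> carrier G" "u \<notin> H" and v: "v \<in> carrier G" "v \<notin> H"
  shows "line u = line v \<longleftrightarrow> {\<one>, u, v} \<notin> \<B>"
proof
  assume "line u = line v"
  moreover have "v \<in> line v" using v(1) triple_basis_iff unfolding line_def by simp
  ultimately show "{\<one>, u, v} \<notin> \<B>" unfolding line_def by blast
next
  assume "{\<one>, u, v} \<notin> \<B>"
  then show "line u = line v"
    using line_subset[OF u v(2)] line_subset[OF v u(2)] by (auto simp: insert_commute)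
qed

definition R :: "('a set \<times> 'a set) set" where
  "R = {(A, A'). A \<in> nontrivial_lcosets H \<and> A' \<in> nontrivial_lcosets H \<and>
          m_closure (carrier G) \<B> (insert \<one> A) = m_closure (carrier G) \<B> (insert \<one> A')}"

lemma matroid_to_pair_eq: "matroid_to_pair G \<B> = (H, R)"
  unfolding matroid_to_pair_def R_def m_closure_one Let_def ..

lemma lcos_R_iff:
  assumes a: "a \<in> carrier G" and b: "b \<in> carrier G"
  shows "(a <# H, b <# H) \<in> R \<longleftrightarrow> a \<notin> H \<and> b \<notin> H \<and> {\<one>, a, b} \<notin> \<B>"
  unfolding R_def
  using lcos_mem_nontrivial_lcosets_iff[OF subgroup_H a] lcos_mem_nontrivial_lcosets_iff[OF subgroup_H b]
    m_closure_line[OF a] m_closure_line[OF b] line_eq_iff[OF a _ b] by auto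

lemma basis_one_iff:
  assumes u: "u \<in> carrier G" and v: "v \<in> carrier G"
  shows "{\<one>, u, v} \<in> \<B> \<longleftrightarrow> \<not> collinear_one G H R u v"
proof -
  have "u \<notin> H \<and> v \<notin> H" if B: "{\<one>, u, v} \<in> \<B>"
  proof -
    have "indep {\<one>, u}" "indep {\<one>, v}"
      using m_indep_subset[OF basis_indep[OF B], of "{\<one>, u}"]
        m_indep_subset[OF basis_indep[OF B], of "{\<one>, v}"] by auto
    moreover have "\<one> \<noteq> u" "\<one> \<noteq> v" using B triple_basis_iff by auto
    ultimately show ?thesis using notin_H_iff u v by blast
  qed
  then show ?thesis unfolding collinear_one_def using lcos_R_iff[OF u v] by blast
qed

lemma triple_basis_iff_not_collinear:
  assumes x: "x \<in> carrier G" and y: "y \<in> carrier G" and z: "z \<in> carrier G"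
  shows "{x, y, z} \<in> \<B> \<longleftrightarrow> \<not> collinear G H R x y z"
proof -
  have "{x, y, z} \<in> \<B> \<longleftrightarrow> {inv x \<otimes> x, inv x \<otimes> y, inv x \<otimes> z} \<in> \<B>"
    by (rule translate_triple_basis_iff[OF inv_closed[OF x] x y z, symmetric])
  also have "\<dots> \<longleftrightarrow> \<not> collinear_one G H R (inv x \<otimes> y) (inv x \<otimes> z)"
    using basis_one_iff x y z by simp
  finally show ?thesis unfolding collinear_def .
qed

lemma bases_eq_pair_bases: "\<B> = pair_bases G H R"
proof
  show "\<B> \<subseteq> pair_bases G H R"
  proof
    fix T assume T: "T \<in> \<B>"
    then obtain x y z where xyz: "T = {x, y, z}" using basis_card card_3_iff by metis
    then have "x \<in> carrier G" "y \<in> carrier G" "z \<in> carrier G"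
      using matroid_bases_subset[OF matroid T] by auto
    with T xyz show "T \<in> pair_bases G H R"
      using triple_basis_iff_not_collinear unfolding pair_bases_def by blast
  qed
next
  show "pair_bases G H R \<subseteq> \<B>"
  proof
    fix T assume "T \<in> pair_bases G H R"
    then obtain x y z where "T = {x, y, z}" "x \<in> carrier G" "y \<in> carrier G" "z \<in> carrier G"
      "\<not> collinear G H R x y z" unfolding pair_bases_def by blast
    then show "T \<in> \<B>" using triple_basis_iff_not_collinear by simp
  qed
qed

lemma ex_basis_one: "\<exists>u\<in>carrier G. \<exists>v\<in>carrier G. {\<one>, u, v} \<in> \<B>"
proof -
  obtain T where T: "T \<in> \<B>" using ex_basis by blast
  then obtain x y z where xyz: "T = {x, y, z}" using basis_card card_3_iff by metis
  then have c: "x \<in> carrier G" "y \<in> carrier G" "z \<in> carrier G"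
    using matroid_bases_subset[OF matroid T] by auto
  have "{inv x \<otimes> x, inv x \<otimes> y, inv x \<otimes> z} \<in> \<B>"
    using translate_triple_basis_iff[OF inv_closed[OF c(1)] c] T xyz by simp
  then show ?thesis using c by auto
qed

lemma R_inv:
  assumes a: "a \<in> carrier G" and b: "b \<in> carrier G"
    and ab: "(a <# H, b <# H) \<in> R" and ne: "a <# H \<noteq> b <# H"
  shows "(inv a <# H, (inv a \<otimes> b) <# H) \<in> R"
proof -
  have "a \<notin> H" and nB: "{\<one>, a, b} \<notin> \<B>" using lcos_R_iff[OF a b] ab by auto
  then have "inv a \<notin> H" using subgroup.m_inv_closed[OF subgroup_H] a by fastforce
  moreover have "inv a \<otimes> b \<notin> H" using ne lcos_eq_iff[OF subgroup_H a b] by blast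
  moreover have "{inv a \<otimes> \<one>, inv a \<otimes> a, inv a \<otimes> b} \<notin> \<B>"
    using translate_triple_basis_iff[OF inv_closed[OF a] one_closed a b] nB by blast
  then have "{\<one>, inv a, inv a \<otimes> b} \<notin> \<B>" using a by (simp add: insert_commute)
  ultimately show ?thesis using lcos_R_iff a b by simp
qed

lemma R_left_mult:
  assumes a: "a \<in> carrier G" and b: "b \<in> carrier G" and h: "h \<in> H"
    and ab: "(a <# H, b <# H) \<in> R"
  shows "((h \<otimes> a) <# H, (h \<otimes> b) <# H) \<in> R"
proof -
  have hc: "h \<in> carrier G" using h H_subset by blast
  have aH: "a \<notin> H" and bH: "b \<notin> H" and nB: "{\<one>, a, b} \<notin> \<B>" using lcos_R_iff[OF a b] ab by auto
  have "h \<otimes> a \<notin> H" "h \<otimes> b \<notin> H"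
    using aH bH subgroup_mult_mem_iff[OF subgroup_H h] a b by auto
  moreover have "{\<one>, h \<otimes> a, h \<otimes> b} \<notin> \<B>"
  proof
    assume "{\<one>, h \<otimes> a, h \<otimes> b} \<in> \<B>"
    then have "{inv h \<otimes> \<one>, inv h \<otimes> (h \<otimes> a), inv h \<otimes> (h \<otimes> b)} \<in> \<B>"
      using translate_triple_basis_iff[OF inv_closed[OF hc] one_closed m_closed[OF hc a] m_closed[OF hc b]]
      by blast
    then have B: "{inv h, a, b} \<in> \<B>" using hc a b by (simp add: m_assoc[symmetric])
    \<comment> \<open>\<open>h\<inverse>\<close> is parallel to \<open>1\<close>, so it may be replaced by \<open>1\<close>\<close>
    have "inv h = \<one> \<or> \<not> indep {inv h, \<one>}"
      using subgroup.m_inv_closed[OF subgroup_H h] unfolding H_def by (auto simp: insert_commute)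
    then have "{\<one>, a, b} \<in> \<B>"
      using B basis_replace_parallel[OF inv_closed[OF hc] one_closed B] by auto
    with nB show False by simp
  qed
  ultimately show ?thesis using lcos_R_iff hc a b by simp
qed

lemma valid_pair_H_R: "valid_pair G H R"
proof -
  obtain u v where uv: "u \<in> carrier G" "v \<in> carrier G" "{\<one>, u, v} \<in> \<B>"
    using ex_basis_one by blast
  then have u: "u \<notin> H" and v: "v \<notin> H" and not_R: "(u <# H, v <# H) \<notin> R"
    using basis_one_iff unfolding collinear_one_def by auto
  have equiv: "equiv (nontrivial_lcosets H) R"
    unfolding R_def by (rule equiv_kernel_on)
  have "2 \<le> card (nontrivial_lcosets H // R)"
    using two_le_card_quotient[OF equiv finite_nontrivial_lcosets[OF subgroup_H finite_carrier] _ _ not_R]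
      lcos_mem_nontrivial_lcosets_iff[OF subgroup_H] uv u v by blast
  moreover have "H \<noteq> carrier G" using u uv by blast
  ultimately show ?thesis
    unfolding valid_pair_def using subgroup_H equiv R_inv R_left_mult by blast
qed

lemma simple_iff_H_trivial: "simple_matroid (carrier G) \<B> \<longleftrightarrow> H = {\<one>}"
proof -
  have "simple_matroid (carrier G) \<B> \<longleftrightarrow> (\<forall>x\<in>carrier G. \<forall>y\<in>carrier G. x \<noteq> y \<longrightarrow> inv x \<otimes> y \<notin> H)"
    using simple_matroid_iff_pairs_indep[OF matroid indep_singleton] indep_pair_iff by simp
  also have "\<dots> \<longleftrightarrow> H = {\<one>}"
  proof
    assume pairs: "\<forall>x\<in>carrier G. \<forall>y\<in>carrier G. x \<noteq> y \<longrightarrow> inv x \<otimes> y \<notin> H"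
    show "H = {\<one>}"
      using pairs[rule_format, OF one_closed] H_subset one_in_H by auto
  qed (use inv_mult_eq_one_iff in auto)
  finally show ?thesis .
qed

lemma matroid_to_pair_mem_valid_pairs: "matroid_to_pair G \<B> \<in> valid_pairs G"
  unfolding matroid_to_pair_eq valid_pairs_def using valid_pair_H_R by simp

lemma pair_bases_matroid_to_pair: "case_prod (pair_bases G) (matroid_to_pair G \<B>) = \<B>"
  unfolding matroid_to_pair_eq prod.case by (rule bases_eq_pair_bases[symmetric])

lemma simple_iff_matroid_to_pair:
  "fst (matroid_to_pair G \<B>) = {\<one>} \<longleftrightarrow> simple_matroid (carrier G) \<B>"
  unfolding matroid_to_pair_eq using simple_iff_H_trivial by simp

end

section \<open>From a pair to a rank 3 invariant matroid\<close>

locale coset_pair = group G for G :: "('a, 'b) monoid_scheme" (structure) +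
  fixes H :: "'a set" and r :: "('a set \<times> 'a set) set"
  assumes valid: "valid_pair G H r" and finite_carrier: "finite (carrier G)"
begin

abbreviation col1 :: "'a \<Rightarrow> 'a \<Rightarrow> bool" where "col1 \<equiv> collinear_one G H r"
abbreviation col :: "'a \<Rightarrow> 'a \<Rightarrow> 'a \<Rightarrow> bool" where "col \<equiv> collinear G H r"

lemma subgroup_H: "subgroup H G"
  and H_ne_carrier: "H \<noteq> carrier G"
  and equiv_r: "equiv (nontrivial_lcosets H) r"
  and two_le_card_classes: "2 \<le> card (nontrivial_lcosets H // r)"
  and r_inv: "\<lbrakk>a \<in> carrier G; b \<in> carrier G; (a <# H, b <# H) \<in> r; a <# H \<noteq> b <# H\<rbrakk>
               \<Longrightarrow> (inv a <# H, (inv a \<otimes> b) <# H) \<in> r"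
  and r_left_mult: "\<lbrakk>a \<in> carrier G; b \<in> carrier G; h \<in> H; (a <# H, b <# H) \<in> r\<rbrakk>
               \<Longrightarrow> ((h \<otimes> a) <# H, (h \<otimes> b) <# H) \<in> r"
  using valid unfolding valid_pair_def by blast+

lemma H_subset: "H \<subseteq> carrier G"
  using subgroup.subset[OF subgroup_H] .

lemma col1_sym: "col1 u v \<Longrightarrow> col1 v u"
  using equiv_r unfolding collinear_one_def equiv_def by (blast dest: symD)

lemma col1_refl: "u \<in> carrier G \<Longrightarrow> col1 u u"
  unfolding collinear_one_def using equiv_r lcos_mem_nontrivial_lcosets_iff[OF subgroup_H]
  by (auto elim!: equivE dest: refl_onD)

lemma col1_trans: "u \<notin> H \<Longrightarrow> col1 u v \<Longrightarrow> col1 u w \<Longrightarrow> col1 v w"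
  unfolding collinear_one_def using equiv_r
  by (auto elim!: equivE dest: symD transD)

lemma col1_of_lcos_eq:
  assumes u: "u \<in> carrier G" and v: "v \<in> carrier G" and uv: "inv u \<otimes> v \<in> H"
  shows "col1 u v"
  using col1_refl[OF u] lcos_eq_iff[OF subgroup_H u v] uv unfolding collinear_one_def by metis

lemma col1_inv:
  assumes u: "u \<in> carrier G" and v: "v \<in> carrier G" and uv: "col1 u v"
  shows "col1 (inv u) (inv u \<otimes> v)"
proof -
  consider "u \<in> H" | "v \<in> H" | "u <# H = v <# H" | "(u <# H, v <# H) \<in> r" "u <# H \<noteq> v <# H"
    using uv unfolding collinear_one_def by blast
  then show ?thesis
  proof cases
    case 1
    then show ?thesis using subgroup.m_inv_closed[OF subgroup_H] unfolding collinear_one_def by blast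
  next
    case 2
    have "inv (inv u) \<otimes> (inv u \<otimes> v) = v" using u v by (simp add: m_assoc[symmetric])
    then show ?thesis using col1_of_lcos_eq[of "inv u" "inv u \<otimes> v"] 2 u v by simp
  next
    case 3
    then show ?thesis using lcos_eq_iff[OF subgroup_H u v] unfolding collinear_one_def by blast
  next
    case 4
    then show ?thesis using r_inv[OF u v] unfolding collinear_one_def by blast
  qed
qed

lemma col1_left_mult:
  assumes u: "u \<in> carrier G" and v: "v \<in> carrier G" and h: "h \<in> H" and uv: "col1 u v"
  shows "col1 (h \<otimes> u) (h \<otimes> v)"
  using uv r_left_mult[OF u v h] subgroup_mult_mem_iff[OF subgroup_H h] u v
  unfolding collinear_one_def by blast

lemma col_swap12:
  assumes x: "x \<in> carrier G" and y: "y \<in> carrier G" and z: "z \<in> carrier G" and c: "col x y z"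
  shows "col y x z"
proof -
  have "col1 (inv (inv x \<otimes> y)) (inv (inv x \<otimes> y) \<otimes> (inv x \<otimes> z))"
    using col1_inv c x y z unfolding collinear_def by simp
  moreover have "inv (inv x \<otimes> y) = inv y \<otimes> x" using x y by (simp add: inv_mult_group)
  moreover have "inv (inv x \<otimes> y) \<otimes> (inv x \<otimes> z) = inv y \<otimes> z"
    using inv_mult_translate[OF inv_closed[OF x] y z] x by simp
  ultimately show ?thesis unfolding collinear_def by simp
qed

lemma col_swap23: "col x y z \<Longrightarrow> col x z y"
  unfolding collinear_def using col1_sym by blast

lemma col_of_inv_mult_mem: "inv x \<otimes> y \<in> H \<Longrightarrow> col x y z"
  unfolding collinear_def collinear_one_def by blast

lemma col_triv:
  assumes "x \<in> carrier G" "y \<in> carrier G"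
  shows "col x x y" "col x y y" "col x y x"
  using assms col1_refl[of "inv x \<otimes> y"] subgroup.one_closed[OF subgroup_H]
  unfolding collinear_def collinear_one_def by auto

lemma not_col_perms:
  assumes "x \<in> carrier G" "y \<in> carrier G" "z \<in> carrier G" "\<not> col x y z"
  shows "\<not> col x z y" "\<not> col y x z" "\<not> col y z x" "\<not> col z x y" "\<not> col z y x"
  using assms col_swap12 col_swap23 by blast+

lemma not_col_distinct:
  "x \<in> carrier G \<Longrightarrow> y \<in> carrier G \<Longrightarrow> z \<in> carrier G \<Longrightarrow> \<not> col x y z \<Longrightarrow> x \<noteq> y \<and> y \<noteq> z \<and> x \<noteq> z"
  using col_triv by blast

lemma col_translate:
  assumes "g \<in> carrier G" "x \<in> carrier G" "y \<in> carrier G" "z \<in> carrier G"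
  shows "col (g \<otimes> x) (g \<otimes> y) (g \<otimes> z) \<longleftrightarrow> col x y z"
  unfolding collinear_def using inv_mult_translate assms by simp

lemma col_replace_first:
  assumes x: "x \<in> carrier G" and x': "x' \<in> carrier G" and y: "y \<in> carrier G" and z: "z \<in> carrier G"
    and xx': "inv x \<otimes> x' \<in> H" and c: "col x y z"
  shows "col x' y z"
proof -
  have h: "inv x' \<otimes> x \<in> H"
    using subgroup.m_inv_closed[OF subgroup_H xx'] x x' by (simp add: inv_mult_group)
  have "col1 ((inv x' \<otimes> x) \<otimes> (inv x \<otimes> y)) ((inv x' \<otimes> x) \<otimes> (inv x \<otimes> z))"
    using col1_left_mult[OF _ _ h] c x y z unfolding collinear_def by simp
  moreover have "(inv x' \<otimes> x) \<otimes> (inv x \<otimes> w) = inv x' \<otimes> w" if "w \<in> carrier G" for w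
    using x x' that by (simp add: m_assoc[symmetric]) (simp add: m_assoc)
  ultimately show ?thesis unfolding collinear_def using y z by simp
qed

lemma col_trans:
  "inv x \<otimes> y \<notin> H \<Longrightarrow> col x y z \<Longrightarrow> col x y w \<Longrightarrow> col x z w"
  unfolding collinear_def using col1_trans by blast

lemma col_on_line:
  assumes a: "a \<in> carrier G" and b: "b \<in> carrier G"
    and y1: "y1 \<in> carrier G" and y2: "y2 \<in> carrier G" and y3: "y3 \<in> carrier G"
    and ab: "inv a \<otimes> b \<notin> H" and c1: "col a b y1" and c2: "col a b y2" and c3: "col a b y3"
  shows "col y1 y2 y3"
proof (cases "inv y1 \<otimes> y2 \<in> H")
  case True
  then show ?thesis by (rule col_of_inv_mult_mem)
next
  case y12: False
  show ?thesis
  proof (cases "inv a \<otimes> y1 \<in> H")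
    case False
    have "col a y1 y2" "col a y1 y3" using col_trans[OF ab] c1 c2 c3 by blast+
    then have "col y1 a y2" "col y1 a y3" using col_swap12 a y1 y2 y3 by blast+
    moreover have "inv y1 \<otimes> a \<notin> H"
      using False subgroup.m_inv_closed[OF subgroup_H] a y1 by (fastforce simp: inv_mult_group)
    ultimately show ?thesis using col_trans y12 by blast
  next
    case True
    have "col y1 b y2" "col y1 b y3" using col_replace_first[OF a y1 b] True c2 c3 y2 y3 by blast+
    moreover have "inv y1 \<otimes> b \<notin> H"
    proof
      assume "inv y1 \<otimes> b \<in> H"
      then have "(inv a \<otimes> y1) \<otimes> (inv y1 \<otimes> b) \<in> H" using True subgroup.m_closed[OF subgroup_H] by blast
      then show False using ab a y1 b by (simp add: m_assoc[symmetric]) (simp add: m_assoc)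
    qed
    ultimately show ?thesis using col_trans y12 by blast
  qed
qed

lemma col_one_iff: "u \<in> carrier G \<Longrightarrow> v \<in> carrier G \<Longrightarrow> col \<one> u v \<longleftrightarrow> col1 u v"
  unfolding collinear_def by simp

lemma ex_not_col1:
  assumes u: "u \<in> carrier G" "u \<notin> H"
  shows "\<exists>w\<in>carrier G. \<not> col1 u w"
proof -
  have "u <# H \<in> nontrivial_lcosets H" using lcos_mem_nontrivial_lcosets_iff[OF subgroup_H] u by blast
  then obtain A where A: "A \<in> nontrivial_lcosets H" "(u <# H, A) \<notin> r"
    using ex_not_related_if_two_le_card_quotient[OF equiv_r two_le_card_classes] by blast
  obtain w where "w \<in> carrier G" "w \<notin> H" "A = w <# H"
    using nontrivial_lcosetsE[OF subgroup_H A(1)] by blast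
  then show ?thesis using A u unfolding collinear_one_def by blast
qed

lemma mem_pair_bases_iff:
  assumes x: "x \<in> carrier G" and y: "y \<in> carrier G" and z: "z \<in> carrier G"
  shows "{x, y, z} \<in> pair_bases G H r \<longleftrightarrow> \<not> col x y z"
proof
  assume "{x, y, z} \<in> pair_bases G H r"
  then obtain a b c where abc: "{x, y, z} = {a, b, c}" "a \<in> carrier G" "b \<in> carrier G" "c \<in> carrier G"
    and nc: "\<not> col a b c" unfolding pair_bases_def by blast
  have "a \<noteq> b" "b \<noteq> c" "a \<noteq> c" using not_col_distinct[OF abc(2-4) nc] by auto
  then have "card {x, y, z} = 3" using abc(1) by simp
  then have "x \<noteq> y" "y \<noteq> z" "x \<noteq> z" by (auto simp: card_insert_if split: if_splits)
  moreover have "x \<in> {a, b, c}" "y \<in> {a, b, c}" "z \<in> {a, b, c}" using abc(1) by blast+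
  ultimately show "\<not> col x y z" using nc not_col_perms[OF abc(2-4) nc] by auto
qed (use x y z in \<open>auto simp: pair_bases_def\<close>)

lemma pair_bases_subset: "B \<in> pair_bases G H r \<Longrightarrow> B \<subseteq> carrier G"
  unfolding pair_bases_def by auto

lemma pair_bases_card: "B \<in> pair_bases G H r \<Longrightarrow> card B = 3"
  unfolding pair_bases_def using not_col_distinct by fastforce

lemma pair_bases_exchange:
  assumes B1: "B1 \<in> pair_bases G H r" and B2: "B2 \<in> pair_bases G H r" and x: "x \<in> B1 - B2"
  shows "\<exists>w\<in>B2 - B1. insert w (B1 - {x}) \<in> pair_bases G H r"
proof -
  obtain p q where pq: "B1 = {x, p, q}" "x \<noteq> p" "p \<noteq> q" "x \<noteq> q"
    using card_3_obtain[OF pair_bases_card[OF B1]] x by blast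
  have c: "x \<in> carrier G" "p \<in> carrier G" "q \<in> carrier G" using pair_bases_subset[OF B1] pq by auto
  have nc: "\<not> col x p q" using B1 pq mem_pair_bases_iff c by simp
  have pq_H: "inv p \<otimes> q \<notin> H"
    using col_of_inv_mult_mem[of p q x] not_col_perms[OF c nc] by blast
  obtain y1 y2 y3 where y: "B2 = {y1, y2, y3}" "y1 \<in> carrier G" "y2 \<in> carrier G" "y3 \<in> carrier G"
    and ny: "\<not> col y1 y2 y3" using B2 unfolding pair_bases_def by blast
  \<comment> \<open>\<open>B2\<close> does not lie on the line through \<open>p\<close> and \<open>q\<close>\<close>
  then obtain w where w: "w \<in> B2" "\<not> col p q w"
    using col_on_line[OF c(2,3) y(2-4) pq_H] by blast
  have wc: "w \<in> carrier G" using w(1) pair_bases_subset[OF B2] by blast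
  have "w \<noteq> p" "w \<noteq> q" using w(2) col_triv[OF c(2,3)] by auto
  then have "w \<in> B2 - B1" using w(1) x pq(1) by blast
  moreover have "insert w (B1 - {x}) = {p, q, w}" using pq by blast
  moreover have "{p, q, w} \<in> pair_bases G H r" using mem_pair_bases_iff[OF c(2,3) wc] w(2) by simp
  ultimately show ?thesis by metis
qed

lemma ex_pair_basis_one: "\<exists>u\<in>carrier G. \<exists>w\<in>carrier G. {\<one>, u, w} \<in> pair_bases G H r"
proof -
  obtain u where u: "u \<in> carrier G" "u \<notin> H" using H_ne_carrier H_subset by blast
  then obtain w where "w \<in> carrier G" "\<not> col1 u w" using ex_not_col1 by blast
  then show ?thesis using u mem_pair_bases_iff col_one_iff by auto
qed

lemma matroid_pair_bases: "matroid_bases (carrier G) (pair_bases G H r)"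
  unfolding matroid_bases_def
  using finite_carrier ex_pair_basis_one pair_bases_subset pair_bases_exchange by blast

lemma G_invariant_pair_bases: "G_invariant G (pair_bases G H r)"
  unfolding G_invariant_def
proof (intro ballI)
  fix g B assume g: "g \<in> carrier G" and B: "B \<in> pair_bases G H r"
  then obtain x y z where xyz: "B = {x, y, z}" "x \<in> carrier G" "y \<in> carrier G" "z \<in> carrier G"
    and nc: "\<not> col x y z" unfolding pair_bases_def by blast
  have "g <# B = {g \<otimes> x, g \<otimes> y, g \<otimes> z}" using xyz by (simp add: l_coset_insert)
  then show "g <# B \<in> pair_bases G H r"
    using mem_pair_bases_iff col_translate g xyz nc by simp
qed

lemma rank_pair_bases: "matroid_rank (carrier G) (pair_bases G H r) = 3"
  using ex_pair_basis_one matroid_rank_eq_card_basis[OF matroid_pair_bases] pair_bases_card by metis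

lemma rank3_inv_matroid_pair_bases: "rank3_inv_matroid G (pair_bases G H r)"
  by (intro rank3_inv_matroid.intro is_group rank3_inv_matroid_axioms.intro
      matroid_pair_bases G_invariant_pair_bases rank_pair_bases)

lemma H_of_pair_bases: "rank3_inv_matroid.H G (pair_bases G H r) = H"
proof -
  interpret M: rank3_inv_matroid G "pair_bases G H r" by (rule rank3_inv_matroid_pair_bases)
  have "x \<notin> M.H \<longleftrightarrow> x \<notin> H" if x: "x \<in> carrier G" for x
  proof
    assume "x \<notin> M.H"
    then have "x \<noteq> \<one>" "M.indep {\<one>, x}" using M.notin_H_iff x by auto
    then obtain B where B: "B \<in> pair_bases G H r" "{\<one>, x} \<subseteq> B" unfolding m_indep_def by blast
    then obtain y z where "B = {\<one>, y, z}" using card_3_obtain[OF pair_bases_card] by blast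
    then obtain w where "B = {\<one>, x, w}" using B(2) \<open>x \<noteq> \<one>\<close> by (auto simp: insert_commute)
    moreover have "w \<in> carrier G" using pair_bases_subset[OF B(1)] calculation by blast
    ultimately have "\<not> col1 x w" using B(1) mem_pair_bases_iff col_one_iff x by simp
    then show "x \<notin> H" unfolding collinear_one_def by blast
  next
    assume "x \<notin> H"
    then obtain w where "w \<in> carrier G" "\<not> col1 x w" using ex_not_col1 x by blast
    then have "{\<one>, x, w} \<in> pair_bases G H r" using mem_pair_bases_iff col_one_iff x by simp
    then have "M.indep {\<one>, x}" unfolding m_indep_def by blast
    moreover have "x \<noteq> \<one>" using \<open>x \<notin> H\<close> subgroup.one_closed[OF subgroup_H] by blast
    ultimately show "x \<notin> M.H" using M.notin_H_iff x by blast
  qed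
  then show ?thesis using M.H_subset H_subset by blast
qed

lemma R_of_pair_bases: "rank3_inv_matroid.R G (pair_bases G H r) = r"
proof -
  interpret M: rank3_inv_matroid G "pair_bases G H r" by (rule rank3_inv_matroid_pair_bases)
  have lcos_iff: "(a <# H, b <# H) \<in> M.R \<longleftrightarrow> (a <# H, b <# H) \<in> r"
    if a: "a \<in> carrier G" and b: "b \<in> carrier G" for a b
  proof -
    have "(a <# H, b <# H) \<in> r \<Longrightarrow> a \<notin> H \<and> b \<notin> H"
      using equiv_type[OF equiv_r] lcos_mem_nontrivial_lcosets_iff[OF subgroup_H] a b by blast
    then show ?thesis
      using M.lcos_R_iff[OF a b] mem_pair_bases_iff[OF one_closed a b] col_one_iff[OF a b]
      unfolding H_of_pair_bases collinear_one_def by blast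
  qed
  have "p \<in> M.R \<longleftrightarrow> p \<in> r" if p: "p \<in> nontrivial_lcosets H \<times> nontrivial_lcosets H" for p
  proof -
    obtain a where a: "a \<in> carrier G" "fst p = a <# H"
      using nontrivial_lcosetsE[OF subgroup_H] p by (metis mem_Times_iff)
    obtain b where b: "b \<in> carrier G" "snd p = b <# H"
      using nontrivial_lcosetsE[OF subgroup_H] p by (metis mem_Times_iff)
    show ?thesis using lcos_iff[OF a(1) b(1)] a(2) b(2) by (metis prod.collapse)
  qed
  moreover have "M.R \<subseteq> nontrivial_lcosets H \<times> nontrivial_lcosets H"
    unfolding M.R_def H_of_pair_bases by blast
  moreover have "r \<subseteq> nontrivial_lcosets H \<times> nontrivial_lcosets H"
    using equiv_type[OF equiv_r] .
  ultimately show ?thesis by blast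
qed

lemma matroid_to_pair_pair_bases: "matroid_to_pair G (pair_bases G H r) = (H, r)"
  using rank3_inv_matroid.matroid_to_pair_eq[OF rank3_inv_matroid_pair_bases]
  unfolding H_of_pair_bases R_of_pair_bases .

end

lemma mem_rank3_inv_matroids_iff:
  "group G \<Longrightarrow> \<B> \<in> rank3_inv_matroids G \<longleftrightarrow> rank3_inv_matroid G \<B>"
  unfolding rank3_inv_matroids_def rank3_inv_matroid_def rank3_inv_matroid_axioms_def by blast

lemma mem_valid_pairs_iff:
  "group G \<Longrightarrow> finite (carrier G) \<Longrightarrow> (H, r) \<in> valid_pairs G \<longleftrightarrow> coset_pair G H r"
  unfolding valid_pairs_def coset_pair_def coset_pair_axioms_def by blast

lemma inj_on_matroid_to_pair:
  assumes "group G"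
  shows "inj_on (matroid_to_pair G) (rank3_inv_matroids G)"
proof (rule inj_on_inverseI)
  fix \<B> assume "\<B> \<in> rank3_inv_matroids G"
  then show "case_prod (pair_bases G) (matroid_to_pair G \<B>) = \<B>"
    unfolding mem_rank3_inv_matroids_iff[OF assms] by (rule rank3_inv_matroid.pair_bases_matroid_to_pair)
qed

lemma image_matroid_to_pair:
  assumes "group G" and "finite (carrier G)"
  shows "matroid_to_pair G ` rank3_inv_matroids G = valid_pairs G"
proof
  show "matroid_to_pair G ` rank3_inv_matroids G \<subseteq> valid_pairs G"
  proof (rule image_subsetI)
    fix \<B> assume "\<B> \<in> rank3_inv_matroids G"
    then show "matroid_to_pair G \<B> \<in> valid_pairs G"
      unfolding mem_rank3_inv_matroids_iff[OF assms(1)]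
      by (rule rank3_inv_matroid.matroid_to_pair_mem_valid_pairs)
  qed
  show "valid_pairs G \<subseteq> matroid_to_pair G ` rank3_inv_matroids G"
  proof clarify
    fix H r assume "(H, r) \<in> valid_pairs G"
    then have "coset_pair G H r" unfolding mem_valid_pairs_iff[OF assms] .
    then have "(H, r) = matroid_to_pair G (pair_bases G H r)"
      and "pair_bases G H r \<in> rank3_inv_matroids G"
      unfolding mem_rank3_inv_matroids_iff[OF assms(1)]
      by (rule coset_pair.matroid_to_pair_pair_bases[symmetric],
          rule coset_pair.rank3_inv_matroid_pair_bases)
    then show "(H, r) \<in> matroid_to_pair G ` rank3_inv_matroids G" by (rule image_eqI)
  qed
qed

theorem corollary3p31:
  fixes G :: "('a, 'b) monoid_scheme"
  assumes "group G" and "finite (carrier G)"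
  shows "bij_betw (matroid_to_pair G) (rank3_inv_matroids G) (valid_pairs G) \<and>
         (\<forall>\<B>\<in>rank3_inv_matroids G.
            fst (matroid_to_pair G \<B>) = {\<one>\<^bsub>G\<^esub>} \<longleftrightarrow> simple_matroid (carrier G) \<B>)"
proof -
  have "fst (matroid_to_pair G \<B>) = {\<one>\<^bsub>G\<^esub>} \<longleftrightarrow> simple_matroid (carrier G) \<B>"
    if "\<B> \<in> rank3_inv_matroids G" for \<B>
    using that unfolding mem_rank3_inv_matroids_iff[OF assms(1)]
    by (rule rank3_inv_matroid.simple_iff_matroid_to_pair)
  then show ?thesis
    unfolding bij_betw_def using inj_on_matroid_to_pair[OF assms(1)] image_matroid_to_pair[OF assms]
    by blast
qed

end
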